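(* Let $0<\lambda_1<\cdots<\lambda_n$ be real numbers and let $r>0$. Then the $n\times n$ matrices \[ \left[\frac{1}{\mathcal A(\lambda_i,\lambda_j)^r}\right],\quad \left[H(\lambda_i,\lambda_j)^r\right],\quad \left[\frac{1}{\mathcal H_\nu(\lambda_i,\lambda_j)^r}\right]\ (0\leq\nu\leq 1,\ \nu\neq\tfrac12),\quad \left[\frac{1}{\mathcal B_\alpha(\lambda_i,\lambda_j)^r}\right]\ (0<\alpha<\infty) \] are totally positive, and the matrices \[ \left[\frac{1}{\mathcal H_{1/2}(\lambda_i,\lambda_j)^r}\right]\ \left(=\left[\frac{1}{\mathcal B_0(\lambda_i,\lambda_j)^r}\right]\right)\quad\text{and}\quad \left[\frac{1}{\mathcal B_\infty(\lambda_i,\lambda_j)^r}\right] \] are totally nonnegative.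
   Context: For positive reals $a,b$: the arithmetic mean $\mathcal A(a,b)=\frac{a+b}{2}$; the harmonic mean $H(a,b)=\frac{2ab}{a+b}$; the Heinz mean $\mathcal H_\nu(a,b)=\frac{a^\nu b^{1-\nu}+a^{1-\nu}b^\nu}{2}$ for $0\leq\nu\leq1$; the binomial mean $\mathcal B_\alpha(a,b)=\left(\frac{a^\alpha+b^\alpha}{2}\right)^{1/\alpha}$ for real $\alpha\neq0$, with $\mathcal B_0(a,b)=\sqrt{ab}$ and $\mathcal B_\infty(a,b)=\max(a,b)$. All matrices are indexed by $i,j=1,\ldots,n$. A matrix is totally positive (resp. totally nonnegative) if all its minors are positive (resp. nonnegative). *)

theory Defs
  imports Complex_Main "Jordan_Normal_Form.DL_Submatrix" "Jordan_Normal_Form.Determinant"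
begin

definition arith_mean :: "real \<Rightarrow> real \<Rightarrow> real" where
  "arith_mean a b = (a + b) / 2"

definition harm_mean :: "real \<Rightarrow> real \<Rightarrow> real" where
  "harm_mean a b = 2 * a * b / (a + b)"

definition heinz_mean :: "real \<Rightarrow> real \<Rightarrow> real \<Rightarrow> real" where
  "heinz_mean \<nu> a b = (a powr \<nu> * b powr (1 - \<nu>) + a powr (1 - \<nu>) * b powr \<nu>) / 2"

text \<open>Binomial mean for real alpha different from 0; B_0 and B_infinity are separate.\<close>
definition binom_mean :: "real \<Rightarrow> real \<Rightarrow> real \<Rightarrow> real" where
  "binom_mean \<alpha> a b = ((a powr \<alpha> + b powr \<alpha>) / 2) powr (1 / \<alpha>)"

definition binom_mean0 :: "real \<Rightarrow> real \<Rightarrow> real" where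
  "binom_mean0 a b = sqrt (a * b)"

definition binom_mean_inf :: "real \<Rightarrow> real \<Rightarrow> real" where
  "binom_mean_inf a b = max a b"

definition totally_positive :: "real mat \<Rightarrow> bool" where
  "totally_positive A \<longleftrightarrow>
     (\<forall>I J. I \<subseteq> {..<dim_row A} \<and> J \<subseteq> {..<dim_col A} \<and> I \<noteq> {} \<and> card I = card J
        \<longrightarrow> det (submatrix A I J) > 0)"

definition totally_nonnegative :: "real mat \<Rightarrow> bool" where
  "totally_nonnegative A \<longleftrightarrow>
     (\<forall>I J. I \<subseteq> {..<dim_row A} \<and> J \<subseteq> {..<dim_col A} \<and> I \<noteq> {} \<and> card I = card J
        \<longrightarrow> det (submatrix A I J) \<ge> 0)"

end

theory Submission
  imports Defs "HOL-Real_Asymp.Real_Asymp"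
begin

text \<open>
  Up to positive row and column factors and an increasing reparametrisation of the points,
  each matrix of the theorem is a matrix [(x i + y j) powr -s] with s > 0, a rank-one matrix,
  or a limit of matrices of the first kind (1 / max a b is the limit of (a^p + b^p) powr (-1/p)
  as p tends to infinity); and every minor of such a matrix is again of the same kind.
  By Rolle's theorem the functions t \<mapsto> (t + y j) powr -s with distinct y j form a Chebyshev
  system on (0, \<infinity>), so det [(x i + y j) powr -s] never vanishes for increasing positive x and y.
  Since these pairs (x, y) form a convex set, the sign of the determinant is constant; it is
  found by letting the last x and y tend to infinity, which after scaling the last row by T powr s
  leaves 2 powr -s times the determinant of order one less.
\<close>

section \<open>Determinants of matrices given by a formula\<close>

lemma det_mat_eq_sum_permutes:
  fixes h :: "nat \<Rightarrow> nat \<Rightarrow> 'a :: comm_ring_1"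
  shows "det (mat m m (\<lambda>(i, j). h i j)) =
    (\<Sum>p | p permutes {0..<m}. of_int (sign p) * (\<Prod>i = 0..<m. h i (p i)))"
  unfolding det_def'[of "mat m m (\<lambda>(i, j). h i j)" m, OF mat_carrier]
  by (intro sum.cong refl arg_cong2[where f = "(*)"] prod.cong) (auto dest: permutes_in_image)

lemma tendsto_det_mat:
  fixes f :: "'b \<Rightarrow> nat \<Rightarrow> nat \<Rightarrow> real"
  assumes "\<And>i j. i < m \<Longrightarrow> j < m \<Longrightarrow> ((\<lambda>t. f t i j) \<longlongrightarrow> g i j) F"
  shows "((\<lambda>t. det (mat m m (\<lambda>(i, j). f t i j))) \<longlongrightarrow> det (mat m m (\<lambda>(i, j). g i j))) F"
  unfolding det_mat_eq_sum_permutes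
  by (intro tendsto_intros) (auto intro: assms dest: permutes_in_image)

lemma continuous_on_det_mat:
  fixes f :: "real \<Rightarrow> nat \<Rightarrow> nat \<Rightarrow> real"
  assumes "\<And>i j. i < m \<Longrightarrow> j < m \<Longrightarrow> continuous_on S (\<lambda>t. f t i j)"
  shows "continuous_on S (\<lambda>t. det (mat m m (\<lambda>(i, j). f t i j)))"
  using assms unfolding continuous_on_def by (blast intro: tendsto_det_mat)

lemma det_mat_scale_rows_cols:
  fixes d e :: "nat \<Rightarrow> 'a :: comm_ring_1"
  shows "det (mat m m (\<lambda>(i, j). d i * e j * h i j)) =
    (\<Prod>i<m. d i) * (\<Prod>j<m. e j) * det (mat m m (\<lambda>(i, j). h i j))"
proof -
  have "(\<Prod>i = 0..<m. d i * e (p i) * h i (p i)) =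
      (\<Prod>i<m. d i) * (\<Prod>j<m. e j) * (\<Prod>i = 0..<m. h i (p i))"
    if "p permutes {0..<m}" for p
    using prod.permute[OF that, of e]
    by (simp add: prod.distrib lessThan_atLeast0 comp_def)
  then show ?thesis
    unfolding det_mat_eq_sum_permutes by (simp add: sum_distrib_left algebra_simps)
qed

lemma det_mat_last_column_zero:
  fixes g :: "nat \<Rightarrow> nat \<Rightarrow> 'a :: comm_ring_1"
  assumes "\<And>i. i < m \<Longrightarrow> g i m = 0"
  shows "det (mat (Suc m) (Suc m) (\<lambda>(i, j). g i j)) = g m m * det (mat m m (\<lambda>(i, j). g i j))"
proof -
  let ?G = "mat (Suc m) (Suc m) (\<lambda>(i, j). g i j)"
  have "det ?G = (\<Sum>i<Suc m. ?G $$ (i, m) * cofactor ?G i m)"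
    by (rule laplace_expansion_column) auto
  also have "\<dots> = g m m * cofactor ?G m m"
    using assms by simp
  also have "mat_delete ?G m m = mat m m (\<lambda>(i, j). g i j)"
    by (rule eq_matI) (auto simp: mat_delete_def)
  then have "cofactor ?G m m = det (mat m m (\<lambda>(i, j). g i j))"
    by (simp add: cofactor_def)
  finally show ?thesis .
qed

lemma det_mat_const_one_nonneg: "0 \<le> det (mat m m (\<lambda>_. 1 :: real))"
proof (cases "m \<le> 1")
  case True
  then have "mat m m (\<lambda>_. 1 :: real) = 1\<^sub>m m" by (intro eq_matI) auto
  then show ?thesis by simp
next
  case False
  then have "det (mat m m (\<lambda>_. 1 :: real)) = 0"
    by (intro det_identical_rows[of _ m 0 1]) (auto simp: row_mat)
  then show ?thesis by simp
qed

section \<open>Totally positive kernels on the positive reals\<close>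

definition pos_increasing :: "nat \<Rightarrow> (nat \<Rightarrow> real) \<Rightarrow> bool" where
  "pos_increasing m x \<longleftrightarrow> (\<forall>i<m. 0 < x i) \<and> (\<forall>i j. i < j \<longrightarrow> j < m \<longrightarrow> x i < x j)"

lemma pos_increasing_Suc_imp: "pos_increasing (Suc m) x \<Longrightarrow> pos_increasing m x"
  unfolding pos_increasing_def by auto

lemma pos_increasing_upd_last:
  assumes "pos_increasing (Suc m) x" "x m \<le> a"
  shows "pos_increasing (Suc m) (x(m := a))"
  using assms unfolding pos_increasing_def
  by (auto simp: less_Suc_eq intro: less_le_trans)

lemma pos_increasing_convex_comb:
  assumes "pos_increasing m x" "pos_increasing m x'" "0 \<le> t" "t \<le> 1"
  shows "pos_increasing m (\<lambda>i. (1 - t) * x i + t * x' i)"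
  unfolding pos_increasing_def
proof (intro conjI allI impI)
  fix i assume "i < m"
  then have "0 < x i" "0 < x' i" using assms(1,2) unfolding pos_increasing_def by auto
  then show "0 < (1 - t) * x i + t * x' i"
    using assms(3,4) by (cases "t = 0") (auto intro: add_nonneg_pos mult_pos_pos)
next
  fix i j assume "i < j" "j < m"
  then have "x i < x j" "x' i < x' j" using assms(1,2) unfolding pos_increasing_def by auto
  then show "(1 - t) * x i + t * x' i < (1 - t) * x j + t * x' j"
  proof (cases "t = 0")
    case False
    then have "(1 - t) * x i \<le> (1 - t) * x j" "t * x' i < t * x' j"
      using assms(3,4) \<open>x i < x j\<close> \<open>x' i < x' j\<close> by (auto intro: mult_left_mono)
    then show ?thesis by (rule add_le_less_mono)
  qed (simp add: \<open>x i < x j\<close>)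
qed

lemma pos_increasing_interlacing:
  assumes "pos_increasing (Suc m) z" "\<And>i. i < m \<Longrightarrow> z i < w i \<and> w i < z (Suc i)"
  shows "pos_increasing m w"
  unfolding pos_increasing_def
proof (intro conjI allI impI)
  fix i assume "i < m"
  then show "0 < w i" using assms unfolding pos_increasing_def by (meson less_SucI order.strict_trans)
next
  fix i j assume ij: "i < j" "j < m"
  then have "z (Suc i) \<le> z j"
    using assms(1) unfolding pos_increasing_def by (cases "Suc i = j") (auto intro!: less_imp_le)
  moreover have "w i < z (Suc i)" "z j < w j" using assms(2) ij by auto
  ultimately show "w i < w j" by linarith
qed

lemma pos_increasing_comp:
  assumes "pos_increasing m x"
    and "\<And>a. 0 < a \<Longrightarrow> 0 < \<phi> a" and "\<And>a b. 0 < a \<Longrightarrow> a < b \<Longrightarrow> \<phi> a < \<phi> b"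
  shows "pos_increasing m (\<lambda>i. \<phi> (x i))"
  using assms unfolding pos_increasing_def by auto

lemma pos_increasing_pick:
  assumes "pos_increasing n x" "I \<subseteq> {..<n}"
  shows "pos_increasing (card I) (\<lambda>i. x (pick I i))"
  unfolding pos_increasing_def
proof (intro conjI allI impI)
  fix i assume "i < card I"
  then show "0 < x (pick I i)"
    using pick_in_set_le assms unfolding pos_increasing_def by blast
next
  fix i j assume "i < j" "j < card I"
  then show "x (pick I i) < x (pick I j)"
    using pick_mono_le pick_in_set_le assms unfolding pos_increasing_def by blast
qed

definition kernel_mat ::
    "(real \<Rightarrow> real \<Rightarrow> real) \<Rightarrow> nat \<Rightarrow> (nat \<Rightarrow> real) \<Rightarrow> (nat \<Rightarrow> real) \<Rightarrow> real mat"
  where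
  "kernel_mat K m x y = mat m m (\<lambda>(i, j). K (x i) (y j))"

definition totally_positive_kernel :: "(real \<Rightarrow> real \<Rightarrow> real) \<Rightarrow> bool" where
  "totally_positive_kernel K \<longleftrightarrow>
     (\<forall>m x y. pos_increasing m x \<longrightarrow> pos_increasing m y \<longrightarrow> 0 < det (kernel_mat K m x y))"

definition totally_nonnegative_kernel :: "(real \<Rightarrow> real \<Rightarrow> real) \<Rightarrow> bool" where
  "totally_nonnegative_kernel K \<longleftrightarrow>
     (\<forall>m x y. pos_increasing m x \<longrightarrow> pos_increasing m y \<longrightarrow> 0 \<le> det (kernel_mat K m x y))"

lemma submatrix_kernel_mat:
  assumes "I \<subseteq> {..<n}" "J \<subseteq> {..<n}" "card I = card J"
  shows "submatrix (kernel_mat K n x y) I J =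
    kernel_mat K (card I) (\<lambda>i. x (pick I i)) (\<lambda>j. y (pick J j))"
proof -
  have "{i. i < n \<and> i \<in> I} = I" "{j. j < n \<and> j \<in> J} = J" using assms by auto
  moreover have "pick I i < n" if "i < card I" for i
    using pick_in_set_le[OF that] assms by auto
  moreover have "pick J j < n" if "j < card I" for j
    using pick_in_set_le[of j J] that assms by auto
  ultimately show ?thesis
    unfolding submatrix_def kernel_mat_def using assms(3) by (intro eq_matI) auto
qed

lemma totally_positive_kernel_mat:
  assumes "totally_positive_kernel K" "pos_increasing n x" "pos_increasing n y"
  shows "totally_positive (kernel_mat K n x y)"
  unfolding totally_positive_def
proof (intro allI impI, elim conjE)
  fix I J assume "I \<subseteq> {..<dim_row (kernel_mat K n x y)}" "J \<subseteq> {..<dim_col (kernel_mat K n x y)}"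
    and card: "card I = card J"
  then have I: "I \<subseteq> {..<n}" and J: "J \<subseteq> {..<n}" by (auto simp: kernel_mat_def)
  with assms card show "0 < det (submatrix (kernel_mat K n x y) I J)"
    unfolding submatrix_kernel_mat[OF I J card] totally_positive_kernel_def
    by (metis pos_increasing_pick)
qed

lemma totally_nonnegative_kernel_mat:
  assumes "totally_nonnegative_kernel K" "pos_increasing n x" "pos_increasing n y"
  shows "totally_nonnegative (kernel_mat K n x y)"
  unfolding totally_nonnegative_def
proof (intro allI impI, elim conjE)
  fix I J assume "I \<subseteq> {..<dim_row (kernel_mat K n x y)}" "J \<subseteq> {..<dim_col (kernel_mat K n x y)}"
    and card: "card I = card J"
  then have I: "I \<subseteq> {..<n}" and J: "J \<subseteq> {..<n}" by (auto simp: kernel_mat_def)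
  with assms card show "0 \<le> det (submatrix (kernel_mat K n x y) I J)"
    unfolding submatrix_kernel_mat[OF I J card] totally_nonnegative_kernel_def
    by (metis pos_increasing_pick)
qed

lemma kernel_mat_cong:
  assumes "pos_increasing m x" "pos_increasing m y" "\<And>a b. 0 < a \<Longrightarrow> 0 < b \<Longrightarrow> K a b = L a b"
  shows "kernel_mat K m x y = kernel_mat L m x y"
  using assms unfolding kernel_mat_def pos_increasing_def by (intro eq_matI) auto

lemma totally_positive_kernel_cong:
  assumes "totally_positive_kernel K" "\<And>a b. 0 < a \<Longrightarrow> 0 < b \<Longrightarrow> L a b = K a b"
  shows "totally_positive_kernel L"
  using assms kernel_mat_cong unfolding totally_positive_kernel_def by metis

lemma totally_nonnegative_kernel_cong:
  assumes "totally_nonnegative_kernel K" "\<And>a b. 0 < a \<Longrightarrow> 0 < b \<Longrightarrow> L a b = K a b"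
  shows "totally_nonnegative_kernel L"
  using assms kernel_mat_cong unfolding totally_nonnegative_kernel_def by metis

lemma totally_positive_imp_nonnegative_kernel:
  "totally_positive_kernel K \<Longrightarrow> totally_nonnegative_kernel K"
  unfolding totally_positive_kernel_def totally_nonnegative_kernel_def by (simp add: less_imp_le)

lemma det_kernel_mat_scale:
  "det (kernel_mat (\<lambda>a b. d a * e b * K a b) m x y) =
    (\<Prod>i<m. d (x i)) * (\<Prod>j<m. e (y j)) * det (kernel_mat K m x y)"
  unfolding kernel_mat_def by (rule det_mat_scale_rows_cols)

lemma prod_pos_increasing_pos:
  fixes d :: "real \<Rightarrow> real"
  assumes "pos_increasing m x" "\<And>a. 0 < a \<Longrightarrow> 0 < d a"
  shows "0 < (\<Prod>i<m. d (x i))"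
  by (rule prod_pos) (use assms in \<open>auto simp: pos_increasing_def\<close>)

lemma totally_positive_kernel_scale:
  assumes "totally_positive_kernel K" "\<And>a. 0 < a \<Longrightarrow> 0 < d a" "\<And>b. 0 < b \<Longrightarrow> 0 < e b"
  shows "totally_positive_kernel (\<lambda>a b. d a * e b * K a b)"
  using assms prod_pos_increasing_pos
  unfolding totally_positive_kernel_def det_kernel_mat_scale by (metis mult_pos_pos)

lemma totally_nonnegative_kernel_scale:
  assumes "totally_nonnegative_kernel K" "\<And>a. 0 < a \<Longrightarrow> 0 < d a" "\<And>b. 0 < b \<Longrightarrow> 0 < e b"
  shows "totally_nonnegative_kernel (\<lambda>a b. d a * e b * K a b)"
  using assms prod_pos_increasing_pos
  unfolding totally_nonnegative_kernel_def det_kernel_mat_scale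
  by (metis mult_nonneg_nonneg less_imp_le)

lemma totally_positive_kernel_comp:
  assumes "totally_positive_kernel K"
    and "\<And>a. 0 < a \<Longrightarrow> 0 < \<phi> a" "\<And>a b. 0 < a \<Longrightarrow> a < b \<Longrightarrow> \<phi> a < \<phi> b"
  shows "totally_positive_kernel (\<lambda>a b. K (\<phi> a) (\<phi> b))"
  using assms pos_increasing_comp[of _ _ \<phi>]
  unfolding totally_positive_kernel_def kernel_mat_def by simp

lemma totally_nonnegative_kernel_comp:
  assumes "totally_nonnegative_kernel K"
    and "\<And>a. 0 < a \<Longrightarrow> 0 < \<phi> a" "\<And>a b. 0 < a \<Longrightarrow> a < b \<Longrightarrow> \<phi> a < \<phi> b"
  shows "totally_nonnegative_kernel (\<lambda>a b. K (\<phi> a) (\<phi> b))"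
  using assms pos_increasing_comp[of _ _ \<phi>]
  unfolding totally_nonnegative_kernel_def kernel_mat_def by simp

lemma totally_nonnegative_kernel_const_one: "totally_nonnegative_kernel (\<lambda>_ _. 1)"
  unfolding totally_nonnegative_kernel_def kernel_mat_def
  using det_mat_const_one_nonneg by (simp add: case_prod_beta')

lemma totally_nonnegative_kernel_limit:
  assumes "F \<noteq> bot" "eventually (\<lambda>p. totally_nonnegative_kernel (K p)) F"
    and "\<And>a b. 0 < a \<Longrightarrow> 0 < b \<Longrightarrow> ((\<lambda>p. K p a b) \<longlongrightarrow> L a b) F"
  shows "totally_nonnegative_kernel L"
  unfolding totally_nonnegative_kernel_def
proof (intro allI impI)
  fix m x y assume x: "pos_increasing m x" and y: "pos_increasing m y"
  have "((\<lambda>p. det (kernel_mat (K p) m x y)) \<longlongrightarrow> det (kernel_mat L m x y)) F"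
    unfolding kernel_mat_def
    using x y assms(3) by (intro tendsto_det_mat) (auto simp: pos_increasing_def)
  moreover have "eventually (\<lambda>p. 0 \<le> det (kernel_mat (K p) m x y)) F"
    using assms(2) x y by (auto elim: eventually_mono simp: totally_nonnegative_kernel_def)
  ultimately show "0 \<le> det (kernel_mat L m x y)"
    using assms(1) by (rule tendsto_lowerbound)
qed

section \<open>The kernel (a + b) powr -s\<close>

lemma has_real_derivative_powr_mult_neg_powr:
  assumes "0 < t + a" "0 < t + b"
  shows "((\<lambda>t. (t + a) powr s * (t + b) powr (-s)) has_real_derivative
    s * (b - a) * (t + a) powr (s - 1) * (t + b) powr (-s - 1)) (at t)"
proof -
  have "((\<lambda>t. (t + a) powr s * (t + b) powr (-s)) has_real_derivative
      s * (t + a) powr (s - 1) * (t + b) powr (-s) + (t + a) powr s * (-s * (t + b) powr (-s - 1))) (at t)"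
    using assms by (auto intro!: derivative_eq_intros DERIV_fun_powr)
  moreover have "(t + a) powr s = (t + a) powr (s - 1) * (t + a)"
    "(t + b) powr (-s) = (t + b) powr (-s - 1) * (t + b)"
    using assms by (simp_all add: powr_diff)
  ultimately show ?thesis
    by (simp add: algebra_simps)
qed

lemma Rolle_between_zeros:
  fixes f f' :: "real \<Rightarrow> real" and z :: "nat \<Rightarrow> real"
  assumes deriv: "\<And>t. a < t \<Longrightarrow> (f has_real_derivative f' t) (at t)"
    and z: "\<And>i. i \<le> m \<Longrightarrow> a < z i" "\<And>i. i < m \<Longrightarrow> z i < z (Suc i)"
    and zero: "\<And>i. i \<le> m \<Longrightarrow> f (z i) = 0"
  obtains w where "\<And>i. i < m \<Longrightarrow> z i < w i \<and> w i < z (Suc i) \<and> f' (w i) = 0"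
proof -
  have "\<exists>w. z i < w \<and> w < z (Suc i) \<and> f' w = 0" if i: "i < m" for i
  proof -
    have "a < z i" using z(1) i by simp
    then have "continuous_on {z i..z (Suc i)} f"
      by (intro continuous_at_imp_continuous_on ballI DERIV_isCont[OF deriv]) auto
    moreover have "f differentiable (at t)" if "z i < t" for t
      using deriv[of t] \<open>a < z i\<close> that unfolding real_differentiable_def by force
    ultimately obtain w where "z i < w" "w < z (Suc i)" "(f has_real_derivative 0) (at w)"
      using Rolle[of "z i" "z (Suc i)" f] z zero i by force
    moreover have "a < w" using \<open>a < z i\<close> \<open>z i < w\<close> by simp
    ultimately show ?thesis using DERIV_unique deriv by blast
  qed
  then show thesis using that by metis
qed

lemma has_real_derivative_neg_powr_combination:
  fixes c y :: "nat \<Rightarrow> real"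
  assumes "0 < t" "\<And>j. j < Suc m \<Longrightarrow> 0 < y j"
  shows "((\<lambda>t. \<Sum>j<Suc m. c j * ((t + y 0) powr s * (t + y j) powr (-s))) has_real_derivative
    s * (t + y 0) powr (s - 1) *
      (\<Sum>j<m. c (Suc j) * (y (Suc j) - y 0) * (t + y (Suc j)) powr (-s - 1))) (at t)"
proof -
  have "((\<lambda>t. \<Sum>j<Suc m. c j * ((t + y 0) powr s * (t + y j) powr (-s))) has_real_derivative
      (\<Sum>j<Suc m. c j * (s * (y j - y 0) * (t + y 0) powr (s - 1) * (t + y j) powr (-s - 1)))) (at t)"
    using assms
    by (intro DERIV_sum DERIV_cmult has_real_derivative_powr_mult_neg_powr) (auto intro: add_pos_pos)
  moreover have "(\<Sum>j<Suc m. c j * (s * (y j - y 0) * (t + y 0) powr (s - 1) * (t + y j) powr (-s - 1)))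
      = s * (t + y 0) powr (s - 1) *
        (\<Sum>j<m. c (Suc j) * (y (Suc j) - y 0) * (t + y (Suc j)) powr (-s - 1))"
    unfolding sum.lessThan_Suc_shift sum_distrib_left by (simp add: algebra_simps)
  ultimately show ?thesis by (rule DERIV_cong)
qed

text \<open>
  Multiplying by (t + y 0) powr s and differentiating removes the term j = 0 and leaves a
  combination of the same kind with exponent s + 1, which by Rolle's theorem vanishes at m points
  interlacing the z i.
\<close>

lemma neg_powr_Chebyshev_system:
  fixes y z c :: "nat \<Rightarrow> real"
  assumes "0 < s" "inj_on y {..<m}" "\<And>j. j < m \<Longrightarrow> 0 < y j" "pos_increasing m z"
    and "\<And>i. i < m \<Longrightarrow> (\<Sum>j<m. c j * (z i + y j) powr (-s)) = 0"
  shows "\<forall>j<m. c j = 0"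
  using assms
proof (induction m arbitrary: s y z c)
  case 0
  then show ?case by simp
next
  case (Suc m)
  have s: "0 < s" and y_inj: "inj_on y {..<Suc m}" and y_pos: "\<And>j. j < Suc m \<Longrightarrow> 0 < y j"
    and z_pos: "\<And>i. i < Suc m \<Longrightarrow> 0 < z i"
    and z_less: "\<And>i. i < m \<Longrightarrow> z i < z (Suc i)"
    using Suc.prems unfolding pos_increasing_def by auto
  define c' where "c' j = c (Suc j) * (y (Suc j) - y 0)" for j
  define G where "G t = (\<Sum>j<Suc m. c j * ((t + y 0) powr s * (t + y j) powr (-s)))" for t
  define G' where "G' t = s * (t + y 0) powr (s - 1) * (\<Sum>j<m. c' j * (t + y (Suc j)) powr (-s - 1))"
    for t
  have G_deriv: "(G has_real_derivative G' t) (at t)" if "0 < t" for t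
    unfolding G_def G'_def c'_def using that y_pos by (rule has_real_derivative_neg_powr_combination)
  have "G (z i) = 0" if "i \<le> m" for i
  proof -
    have "G (z i) = (z i + y 0) powr s * (\<Sum>j<Suc m. c j * (z i + y j) powr (-s))"
      unfolding G_def sum_distrib_left by (simp add: algebra_simps)
    then show ?thesis using Suc.prems(5) that by simp
  qed
  then obtain w where w: "\<And>i. i < m \<Longrightarrow> z i < w i \<and> w i < z (Suc i) \<and> G' (w i) = 0"
    using Rolle_between_zeros[of 0 G G' m z] G_deriv z_pos z_less by force
  have "\<forall>j<m. c' j = 0"
  proof (rule Suc.IH[where s = "s + 1" and y = "\<lambda>j. y (Suc j)" and z = w and c = c'])
    show "0 < s + 1" using s by simp
    show "inj_on (\<lambda>j. y (Suc j)) {..<m}" using y_inj by (auto simp: inj_on_def)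
    show "0 < y (Suc j)" if "j < m" for j using y_pos that by simp
    show "pos_increasing m w"
      using Suc.prems(4) w by (blast intro: pos_increasing_interlacing)
    show "(\<Sum>j<m. c' j * (w i + y (Suc j)) powr (-(s + 1))) = 0" if "i < m" for i
    proof -
      have "0 < w i + y 0" using w[OF that] z_pos[of i] y_pos[of 0] that by simp
      then have "s * (w i + y 0) powr (s - 1) \<noteq> 0" using s by simp
      then show ?thesis using w[OF that] by (simp add: G'_def)
    qed
  qed
  then have "c (Suc j) = 0" if "j < m" for j
    using that y_inj by (auto simp: c'_def inj_on_def)
  moreover have "0 < z 0 + y 0" using z_pos y_pos by (simp add: add_pos_pos)
  then have "c 0 = 0"
    using Suc.prems(5)[of 0] calculation by (simp add: sum.lessThan_Suc_shift del: sum.lessThan_Suc)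
  ultimately show ?case by (auto simp: less_Suc_eq_0_disj)
qed

lemma det_neg_powr_kernel_nonzero:
  assumes "0 < s" "pos_increasing m x" "pos_increasing m y"
  shows "det (kernel_mat (\<lambda>a b. (a + b) powr (-s)) m x y) \<noteq> 0"
proof
  let ?A = "kernel_mat (\<lambda>a b. (a + b) powr (-s)) m x y"
  assume "det ?A = 0"
  then obtain v where v: "v \<in> carrier_vec m" "v \<noteq> 0\<^sub>v m" "?A *\<^sub>v v = 0\<^sub>v m"
    using det_0_iff_vec_prod_zero[of ?A m] by (auto simp: kernel_mat_def)
  have "(\<Sum>j<m. v $ j * (x i + y j) powr (-s)) = 0" if "i < m" for i
  proof -
    have "(?A *\<^sub>v v) $ i = (\<Sum>j<m. v $ j * (x i + y j) powr (-s))"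
      using that v(1)
      by (auto simp: kernel_mat_def scalar_prod_def lessThan_atLeast0 mult.commute intro!: sum.cong)
    then show ?thesis using v(3) that by simp
  qed
  moreover have "inj_on y {..<m}"
    using assms(3) unfolding pos_increasing_def inj_on_def
    by (metis lessThan_iff linorder_neqE_nat order_less_irrefl)
  ultimately have "\<forall>j<m. v $ j = 0"
    using neg_powr_Chebyshev_system[of s y m x "\<lambda>j. v $ j"] assms
    by (auto simp: pos_increasing_def)
  then have "v = 0\<^sub>v m" using v(1) by (intro eq_vecI) auto
  with v(2) show False by simp
qed

lemma det_neg_powr_kernel_pos_transfer:
  assumes s: "0 < s"
    and x: "pos_increasing m x" "pos_increasing m x'" and y: "pos_increasing m y" "pos_increasing m y'"
    and pos: "0 < det (kernel_mat (\<lambda>a b. (a + b) powr (-s)) m x y)"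
  shows "0 < det (kernel_mat (\<lambda>a b. (a + b) powr (-s)) m x' y')"
proof (rule ccontr)
  define xt where "xt t = (\<lambda>i. (1 - t) * x i + t * x' i)" for t
  define yt where "yt t = (\<lambda>j. (1 - t) * y j + t * y' j)" for t
  define \<phi> where "\<phi> t = det (kernel_mat (\<lambda>a b. (a + b) powr (-s)) m (xt t) (yt t))" for t
  have inc: "pos_increasing m (xt t)" "pos_increasing m (yt t)" if "t \<in> {0..1}" for t
    using pos_increasing_convex_comb that x y unfolding xt_def yt_def by auto
  have "continuous_on {0..1} \<phi>"
    unfolding \<phi>_def kernel_mat_def
  proof (rule continuous_on_det_mat)
    fix i j assume "i < m" "j < m"
    then have "\<forall>t\<in>{0..1}. xt t i + yt t j \<noteq> 0"
      using inc unfolding pos_increasing_def by (metis add_pos_pos less_irrefl)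
    then show "continuous_on {0..1} (\<lambda>t. (xt t i + yt t j) powr (-s))"
      unfolding xt_def yt_def by (intro continuous_on_powr continuous_intros) auto
  qed
  moreover assume "\<not> 0 < det (kernel_mat (\<lambda>a b. (a + b) powr (-s)) m x' y')"
  then have "\<phi> 1 \<le> 0" by (simp add: \<phi>_def xt_def yt_def)
  moreover have "0 \<le> \<phi> 0" using pos by (simp add: \<phi>_def xt_def yt_def)
  ultimately obtain t where "t \<in> {0..1}" "\<phi> t = 0"
    using IVT2'[of \<phi> 1 0 0] by auto
  then show False
    using det_neg_powr_kernel_nonzero[OF s inc] unfolding \<phi>_def by blast
qed

lemma tendsto_det_neg_powr_kernel_last_to_infinity:
  assumes "0 < s"
  shows "((\<lambda>T. T powr s * det (kernel_mat (\<lambda>a b. (a + b) powr (-s)) (Suc m) (x(m := T)) (y(m := T))))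
    \<longlongrightarrow> 2 powr (-s) * det (kernel_mat (\<lambda>a b. (a + b) powr (-s)) m x y)) at_top"
proof -
  define f where "f T i j = (if i = m then T powr s else 1) * ((x(m := T)) i + (y(m := T)) j) powr (-s)"
    for T i j
  define g where "g i j = (if i < m \<and> j < m then (x i + y j) powr (-s)
      else if i < m then 0 else if j < m then 1 else 2 powr (-s))" for i j
  have "T powr s * det (kernel_mat (\<lambda>a b. (a + b) powr (-s)) (Suc m) (x(m := T)) (y(m := T))) =
      det (mat (Suc m) (Suc m) (\<lambda>(i, j). f T i j))" for T
  proof -
    have "mat (Suc m) (Suc m) (\<lambda>(i, j). f T i j) =
        multrow m (T powr s) (kernel_mat (\<lambda>a b. (a + b) powr (-s)) (Suc m) (x(m := T)) (y(m := T)))"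
      by (rule eq_matI) (auto simp: f_def kernel_mat_def)
    then show ?thesis by (simp add: det_multrow[of m "Suc m"] kernel_mat_def)
  qed
  moreover have "((\<lambda>T. det (mat (Suc m) (Suc m) (\<lambda>(i, j). f T i j)))
      \<longlongrightarrow> det (mat (Suc m) (Suc m) (\<lambda>(i, j). g i j))) at_top"
  proof (rule tendsto_det_mat)
    fix i j assume "i < Suc m" "j < Suc m"
    then consider "i < m" "j < m" | "i < m" "j = m" | "i = m" "j < m" | "i = m" "j = m"
      by linarith
    then show "((\<lambda>T. f T i j) \<longlongrightarrow> g i j) at_top"
    proof cases
      case 1
      then show ?thesis by (simp add: f_def g_def)
    next
      case 2
      then show ?thesis using assms by (simp add: f_def g_def) real_asymp
    next
      case 3
      then show ?thesis by (simp add: f_def g_def) real_asymp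
    next
      case 4
      then show ?thesis by (simp add: f_def g_def) real_asymp
    qed
  qed
  moreover have "mat m m (\<lambda>(i, j). g i j) = kernel_mat (\<lambda>a b. (a + b) powr (-s)) m x y"
    by (rule eq_matI) (auto simp: g_def kernel_mat_def)
  then have "det (mat (Suc m) (Suc m) (\<lambda>(i, j). g i j)) =
      2 powr (-s) * det (kernel_mat (\<lambda>a b. (a + b) powr (-s)) m x y)"
    using det_mat_last_column_zero[of m g] by (simp add: g_def)
  ultimately show ?thesis by simp
qed

lemma totally_positive_kernel_neg_powr_sum:
  assumes s: "0 < s"
  shows "totally_positive_kernel (\<lambda>a b. (a + b) powr (-s))"
  unfolding totally_positive_kernel_def
proof (rule allI)
  fix m
  show "\<forall>x y. pos_increasing m x \<longrightarrow> pos_increasing m y \<longrightarrow>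
      0 < det (kernel_mat (\<lambda>a b. (a + b) powr (-s)) m x y)"
  proof (induction m)
    case 0
    have "kernel_mat (\<lambda>a b. (a + b) powr (-s)) 0 x y = 1\<^sub>m 0" for x y
      by (rule eq_matI) (auto simp: kernel_mat_def)
    then show ?case by simp
  next
    case (Suc m)
    show ?case
    proof (intro allI impI)
      fix x y assume x: "pos_increasing (Suc m) x" and y: "pos_increasing (Suc m) y"
      have "0 < 2 powr (-s) * det (kernel_mat (\<lambda>a b. (a + b) powr (-s)) m x y)"
        using Suc.IH x y pos_increasing_Suc_imp by simp
      with tendsto_det_neg_powr_kernel_last_to_infinity[OF s]
      have "eventually (\<lambda>T. 0 < T powr s *
          det (kernel_mat (\<lambda>a b. (a + b) powr (-s)) (Suc m) (x(m := T)) (y(m := T)))) at_top"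
        by (rule order_tendstoD(1))
      moreover have "eventually (\<lambda>T. max (x m) (y m) < T) at_top"
        by (rule eventually_gt_at_top)
      ultimately obtain T where T: "max (x m) (y m) < T"
        and "0 < T powr s * det (kernel_mat (\<lambda>a b. (a + b) powr (-s)) (Suc m) (x(m := T)) (y(m := T)))"
        using eventually_happens'[OF trivial_limit_at_top_linorder, OF eventually_conj] by blast
      moreover have "0 < T" using x T unfolding pos_increasing_def by force
      ultimately have "0 < det (kernel_mat (\<lambda>a b. (a + b) powr (-s)) (Suc m) (x(m := T)) (y(m := T)))"
        by (simp add: zero_less_mult_iff)
      moreover have "pos_increasing (Suc m) (x(m := T))" "pos_increasing (Suc m) (y(m := T))"
        using pos_increasing_upd_last x y T by auto
      ultimately show "0 < det (kernel_mat (\<lambda>a b. (a + b) powr (-s)) (Suc m) x y)"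
        using det_neg_powr_kernel_pos_transfer[OF s] x y by blast
    qed
  qed
qed

section \<open>The kernel 1 / max a b\<close>

lemma tendsto_powr_sum_root_inverse_max:
  fixes a b :: real
  assumes "0 < a" "0 < b"
  shows "((\<lambda>p. (a powr p + b powr p) powr (-(1 / p))) \<longlongrightarrow> 1 / max a b) at_top"
proof (rule tendsto_sandwich)
  define M where "M = max a b"
  have M: "0 < M" using assms by (simp add: M_def)
  have bounds: "2 powr (-(1 / p)) * (1 / M) \<le> (a powr p + b powr p) powr (-(1 / p)) \<and>
      (a powr p + b powr p) powr (-(1 / p)) \<le> 1 / M" if p: "0 < p" for p
  proof
    have M_le: "M powr p \<le> a powr p + b powr p"
      using assms by (simp add: M_def max_def)
    have le_2M: "a powr p + b powr p \<le> 2 * M powr p"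
      using assms p powr_mono2[of p a M] powr_mono2[of p b M] by (simp add: M_def)
    have "2 powr (-(1 / p)) * (1 / M) = (2 * M powr p) powr (-(1 / p))"
      using M p by (simp add: powr_mult powr_powr powr_minus divide_inverse)
    also have "\<dots> \<le> (a powr p + b powr p) powr (-(1 / p))"
      using le_2M p assms by (intro powr_mono2') (auto intro: add_pos_pos)
    finally show "2 powr (-(1 / p)) * (1 / M) \<le> (a powr p + b powr p) powr (-(1 / p))" .
    have "(a powr p + b powr p) powr (-(1 / p)) \<le> (M powr p) powr (-(1 / p))"
      using M_le p M by (intro powr_mono2') auto
    also have "\<dots> = 1 / M"
      using M p by (simp add: powr_powr powr_minus divide_inverse)
    finally show "(a powr p + b powr p) powr (-(1 / p)) \<le> 1 / M" .
  qed
  show "eventually (\<lambda>p. 2 powr (-(1 / p)) * (1 / max a b) \<le> (a powr p + b powr p) powr (-(1 / p))) at_top"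
    "eventually (\<lambda>p. (a powr p + b powr p) powr (-(1 / p)) \<le> 1 / max a b) at_top"
    using bounds unfolding M_def by (auto intro: eventually_mono[OF eventually_gt_at_top[of 0]])
  show "((\<lambda>p. 2 powr (-(1 / p)) * (1 / max a b)) \<longlongrightarrow> 1 / max a b) at_top"
    by real_asymp
  show "((\<lambda>p. 1 / max a b) \<longlongrightarrow> 1 / max a b) at_top" by simp
qed

lemma totally_nonnegative_kernel_inverse_max: "totally_nonnegative_kernel (\<lambda>a b. 1 / max a b)"
proof (rule totally_nonnegative_kernel_limit)
  show "(at_top :: real filter) \<noteq> bot" by simp
  show "eventually (\<lambda>p. totally_nonnegative_kernel (\<lambda>a b. (a powr p + b powr p) powr (-(1 / p)))) at_top"
    using eventually_gt_at_top[of 0]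
  proof (rule eventually_mono)
    fix p :: real assume "0 < p"
    then have "totally_positive_kernel (\<lambda>a b. (a powr p + b powr p) powr (-(1 / p)))"
      by (intro totally_positive_kernel_comp[OF totally_positive_kernel_neg_powr_sum]) (auto intro: powr_less_mono2)
    then show "totally_nonnegative_kernel (\<lambda>a b. (a powr p + b powr p) powr (-(1 / p)))"
      by (rule totally_positive_imp_nonnegative_kernel)
  qed
  show "((\<lambda>p. (a powr p + b powr p) powr (-(1 / p))) \<longlongrightarrow> 1 / max a b) at_top"
    if "0 < a" "0 < b" for a b :: real
    using that by (rule tendsto_powr_sum_root_inverse_max)
qed

section \<open>The means\<close>

lemma inverse_half_prod_powr:
  fixes A B S r :: real
  assumes "0 < A" "0 < B" "0 < S"
  shows "1 / (A * B * S / 2) powr r = 2 powr r * A powr (-r) * B powr (-r) * S powr (-r)"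
  using assms by (simp add: powr_divide powr_mult powr_minus field_simps)

lemma inverse_mult_powr:
  fixes x y r :: real
  assumes "0 < x" "0 < y"
  shows "1 / (x * y) powr r = x powr (-r) * y powr (-r)"
  using assms by (simp add: powr_mult powr_minus divide_inverse)

lemma heinz_mean_factor:
  fixes a b \<nu> :: real
  assumes "0 < a" "0 < b"
  shows "heinz_mean \<nu> a b =
    a powr (min \<nu> (1 - \<nu>)) * b powr (min \<nu> (1 - \<nu>)) * (a powr \<bar>2 * \<nu> - 1\<bar> + b powr \<bar>2 * \<nu> - 1\<bar>) / 2"
proof (cases "1/2 \<le> \<nu>")
  case True
  then have "min \<nu> (1 - \<nu>) = 1 - \<nu>" "\<bar>2 * \<nu> - 1\<bar> = 2 * \<nu> - 1" by auto
  moreover have "a powr (1 - \<nu>) * a powr (2 * \<nu> - 1) = a powr \<nu>"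
    "b powr (1 - \<nu>) * b powr (2 * \<nu> - 1) = b powr \<nu>"
    by (simp_all add: powr_add[symmetric])
  ultimately show ?thesis unfolding heinz_mean_def by (simp add: algebra_simps)
next
  case False
  then have "min \<nu> (1 - \<nu>) = \<nu>" "\<bar>2 * \<nu> - 1\<bar> = 1 - 2 * \<nu>" by auto
  moreover have "a powr \<nu> * a powr (1 - 2 * \<nu>) = a powr (1 - \<nu>)"
    "b powr \<nu> * b powr (1 - 2 * \<nu>) = b powr (1 - \<nu>)"
    by (simp_all add: powr_add[symmetric])
  ultimately show ?thesis unfolding heinz_mean_def by (simp add: algebra_simps)
qed

lemma totally_positive_kernel_inverse_arith_mean_powr:
  assumes "0 < r"
  shows "totally_positive_kernel (\<lambda>a b. 1 / arith_mean a b powr r)"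
proof (rule totally_positive_kernel_cong)
  show "totally_positive_kernel (\<lambda>a b. 2 powr r * 1 * (a + b) powr (-r))"
    using assms by (intro totally_positive_kernel_scale totally_positive_kernel_neg_powr_sum) auto
  show "1 / arith_mean a b powr r = 2 powr r * 1 * (a + b) powr (-r)" if "0 < a" "0 < b" for a b
    using inverse_half_prod_powr[of 1 1 "a + b" r] that by (simp add: arith_mean_def)
qed

lemma totally_positive_kernel_harm_mean_powr:
  assumes "0 < r"
  shows "totally_positive_kernel (\<lambda>a b. harm_mean a b powr r)"
proof (rule totally_positive_kernel_cong)
  show "totally_positive_kernel (\<lambda>a b. (2 * a) powr r * b powr r * (a + b) powr (-r))"
    using assms by (intro totally_positive_kernel_scale totally_positive_kernel_neg_powr_sum) auto
  show "harm_mean a b powr r = (2 * a) powr r * b powr r * (a + b) powr (-r)" if "0 < a" "0 < b" for a b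
    using that by (simp add: harm_mean_def powr_divide powr_mult powr_minus field_simps)
qed

lemma totally_positive_kernel_inverse_heinz_mean_powr:
  assumes "0 < r" "\<nu> \<noteq> 1/2"
  shows "totally_positive_kernel (\<lambda>a b. 1 / heinz_mean \<nu> a b powr r)"
proof (rule totally_positive_kernel_cong)
  define p where "p = min \<nu> (1 - \<nu>)"
  define t where "t = \<bar>2 * \<nu> - 1\<bar>"
  have "0 < t" using assms(2) by (simp add: t_def)
  then have "totally_positive_kernel (\<lambda>a b. (a powr t + b powr t) powr (-r))"
    using assms(1) by (intro totally_positive_kernel_comp[OF totally_positive_kernel_neg_powr_sum])
      (auto intro: powr_less_mono2)
  then show "totally_positive_kernel (\<lambda>a b. 2 powr r * (a powr p) powr (-r) * (b powr p) powr (-r) *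
      (a powr t + b powr t) powr (-r))"
    by (intro totally_positive_kernel_scale[where d = "\<lambda>a. 2 powr r * (a powr p) powr (-r)"]) auto
  show "1 / heinz_mean \<nu> a b powr r =
      2 powr r * (a powr p) powr (-r) * (b powr p) powr (-r) * (a powr t + b powr t) powr (-r)"
    if "0 < a" "0 < b" for a b
  proof -
    have "heinz_mean \<nu> a b = a powr p * b powr p * (a powr t + b powr t) / 2"
      unfolding p_def t_def using that by (rule heinz_mean_factor)
    then show ?thesis
      using that by (simp only:) (rule inverse_half_prod_powr, auto intro: add_pos_pos)
  qed
qed

lemma totally_positive_kernel_inverse_binom_mean_powr:
  assumes "0 < r" "0 < \<alpha>"
  shows "totally_positive_kernel (\<lambda>a b. 1 / binom_mean \<alpha> a b powr r)"
proof (rule totally_positive_kernel_cong)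
  have "totally_positive_kernel (\<lambda>a b. (a powr \<alpha> + b powr \<alpha>) powr (-(r / \<alpha>)))"
    using assms by (intro totally_positive_kernel_comp[OF totally_positive_kernel_neg_powr_sum])
      (auto intro: powr_less_mono2)
  then show "totally_positive_kernel (\<lambda>a b. 2 powr (r / \<alpha>) * 1 * (a powr \<alpha> + b powr \<alpha>) powr (-(r / \<alpha>)))"
    by (intro totally_positive_kernel_scale) auto
  show "1 / binom_mean \<alpha> a b powr r = 2 powr (r / \<alpha>) * 1 * (a powr \<alpha> + b powr \<alpha>) powr (-(r / \<alpha>))"
    if "0 < a" "0 < b" for a b
    using that inverse_half_prod_powr[of 1 1 "a powr \<alpha> + b powr \<alpha>" "r / \<alpha>"]
    by (simp add: binom_mean_def powr_powr add_pos_pos)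
qed

lemma totally_nonnegative_kernel_inverse_heinz_mean_half_powr:
  "totally_nonnegative_kernel (\<lambda>a b. 1 / heinz_mean (1/2) a b powr r)"
proof (rule totally_nonnegative_kernel_cong)
  show "totally_nonnegative_kernel (\<lambda>a b. (a powr (1/2)) powr (-r) * (b powr (1/2)) powr (-r) * 1)"
    by (intro totally_nonnegative_kernel_scale totally_nonnegative_kernel_const_one) auto
  show "1 / heinz_mean (1/2) a b powr r = (a powr (1/2)) powr (-r) * (b powr (1/2)) powr (-r) * 1"
    if "0 < a" "0 < b" for a b :: real
  proof -
    have "heinz_mean (1/2) a b = a powr (1/2) * b powr (1/2)" by (simp add: heinz_mean_def)
    then show ?thesis
      unfolding mult_1_right by (simp only:) (rule inverse_mult_powr, use that in auto)
  qed
qed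

lemma binom_mean0_eq_heinz_mean_half:
  assumes "0 < a" "0 < b"
  shows "binom_mean0 a b = heinz_mean (1/2) a b"
  using assms by (simp add: binom_mean0_def heinz_mean_def powr_half_sqrt real_sqrt_mult)

lemma totally_nonnegative_kernel_inverse_binom_mean0_powr:
  "totally_nonnegative_kernel (\<lambda>a b. 1 / binom_mean0 a b powr r)"
proof (rule totally_nonnegative_kernel_cong[OF totally_nonnegative_kernel_inverse_heinz_mean_half_powr])
  show "1 / binom_mean0 a b powr r = 1 / heinz_mean (1/2) a b powr r" if "0 < a" "0 < b" for a b :: real
    using that by (simp only: binom_mean0_eq_heinz_mean_half)
qed

lemma totally_nonnegative_kernel_inverse_binom_mean_inf_powr:
  assumes "0 < r"
  shows "totally_nonnegative_kernel (\<lambda>a b. 1 / binom_mean_inf a b powr r)"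
proof (rule totally_nonnegative_kernel_cong)
  show "totally_nonnegative_kernel (\<lambda>a b. 1 / max (a powr r) (b powr r))"
    using assms by (intro totally_nonnegative_kernel_comp[OF totally_nonnegative_kernel_inverse_max])
      (auto intro: powr_less_mono2)
  show "1 / binom_mean_inf a b powr r = 1 / max (a powr r) (b powr r)" if "0 < a" "0 < b" for a b
  proof (cases "a \<le> b")
    case True
    then show ?thesis using that assms by (simp add: binom_mean_inf_def max_def powr_mono2)
  next
    case False
    then have "b powr r < a powr r" using that assms by (simp add: powr_less_mono2)
    then show ?thesis using False by (simp add: binom_mean_inf_def max_def)
  qed
qed

theorem theorem3p2:
  fixes n :: nat and lam :: "nat \<Rightarrow> real" and r :: real
  assumes pos: "0 < lam 0"
    and incr: "\<And>i j. i < j \<Longrightarrow> j < n \<Longrightarrow> lam i < lam j"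
    and r: "r > 0"
  shows "totally_positive (mat n n (\<lambda>(i, j). 1 / arith_mean (lam i) (lam j) powr r))
       \<and> totally_positive (mat n n (\<lambda>(i, j). harm_mean (lam i) (lam j) powr r))
       \<and> (\<forall>\<nu>. 0 \<le> \<nu> \<and> \<nu> \<le> 1 \<and> \<nu> \<noteq> 1/2 \<longrightarrow>
            totally_positive (mat n n (\<lambda>(i, j). 1 / heinz_mean \<nu> (lam i) (lam j) powr r)))
       \<and> (\<forall>\<alpha>. 0 < \<alpha> \<longrightarrow>
            totally_positive (mat n n (\<lambda>(i, j). 1 / binom_mean \<alpha> (lam i) (lam j) powr r)))
       \<and> totally_nonnegative (mat n n (\<lambda>(i, j). 1 / heinz_mean (1/2) (lam i) (lam j) powr r))
       \<and> totally_nonnegative (mat n n (\<lambda>(i, j). 1 / binom_mean0 (lam i) (lam j) powr r))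
       \<and> totally_nonnegative (mat n n (\<lambda>(i, j). 1 / binom_mean_inf (lam i) (lam j) powr r))"
proof -
  have "0 < lam i" if "i < n" for i
    using pos incr[of 0 i] that by (cases "i = 0") auto
  then have lam: "pos_increasing n lam"
    unfolding pos_increasing_def using incr by blast
  have TP: "totally_positive (mat n n (\<lambda>(i, j). K (lam i) (lam j)))"
    if "totally_positive_kernel K" for K
    using totally_positive_kernel_mat[OF that lam lam] unfolding kernel_mat_def .
  have TN: "totally_nonnegative (mat n n (\<lambda>(i, j). K (lam i) (lam j)))"
    if "totally_nonnegative_kernel K" for K
    using totally_nonnegative_kernel_mat[OF that lam lam] unfolding kernel_mat_def .
  show ?thesis
    using TP[OF totally_positive_kernel_inverse_arith_mean_powr[OF r]]
      TP[OF totally_positive_kernel_harm_mean_powr[OF r]]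
      TP[OF totally_positive_kernel_inverse_heinz_mean_powr[OF r]]
      TP[OF totally_positive_kernel_inverse_binom_mean_powr[OF r]]
      TN[OF totally_nonnegative_kernel_inverse_heinz_mean_half_powr]
      TN[OF totally_nonnegative_kernel_inverse_binom_mean0_powr]
      TN[OF totally_nonnegative_kernel_inverse_binom_mean_inf_powr[OF r]]
    by blast
qed

end
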